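(* There exist absolute positive constants $c,C$ such that the following holds. For a positive integer $n$ let $\pi$ be a uniformly random permutation of $\{1,\dots,n\}$ and $W=\sum_{i=1}^n \mathbf 1\{\pi(i)=i\}$ its number of fixed points. Let $Y\sim\mathrm{Poi}(1)$. Then for all positive integers $k$ with $k^2/n\le c$, $$\Big|\frac{P(W\ge k)}{P(Y\ge k)}-1\Big|\le \frac{Ck^2}{n}.$$
   Context: $\mathrm{Poi}(1)$ is the Poisson distribution with mean $1$. *)

theory Defs
  imports "HOL-Probability.Probability" "HOL-Combinatorics.Permutations"
begin

definition unif_perm :: "nat \<Rightarrow> (nat \<Rightarrow> nat) pmf" where
  "unif_perm n = pmf_of_set {\<sigma>. \<sigma> permutes {1..n}}"

definition num_fixed :: "nat \<Rightarrow> (nat \<Rightarrow> nat) \<Rightarrow> nat" where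
  "num_fixed n \<sigma> = card {i \<in> {1..n}. \<sigma> i = i}"

end

theory Submission
  imports Defs
begin

(* The proof is by exact computation.  Counting pairs (permutation, set of fixed points)
   gives the factorial moments  sum_sigma (W(sigma) choose j) = (n choose j) (n - j)!,
   and binomial inversion turns them into the rencontres numbers
   #{sigma. W(sigma) = m} = n!/m! * sum_{i <= n-m} (-1)^i / i!.
   Hence P(W = m) differs from P(Y = m) = e^-1 / m! only by the tail of the alternating
   series for e^-1, which is at most 1 / (m! (n-m+1)!).  Summing over m < k bounds
   |P(W >= k) - P(Y >= k)| by k / (n-k+2)!, while P(Y >= k) >= e^-1 / k!.  For 2k <= n this
   yields the relative error 6k/n, which gives the theorem with c = 1/2 and C = 6. *)

lemma alternating_series_remainder:
  fixes a :: "nat \<Rightarrow> real"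
  assumes "a \<longlonglongrightarrow> 0" and "\<And>i. 0 \<le> a i" and "\<And>i. a (Suc i) \<le> a i"
  shows "\<bar>(\<Sum>i. (-1)^i * a i) - (\<Sum>i<L. (-1)^i * a i)\<bar> \<le> a L"
proof -
  define s where "s N = (\<Sum>i<N. (-1)^i * a i)" for N
  have below: "s (2*n) \<le> (\<Sum>i. (-1)^i * a i)" and above: "(\<Sum>i. (-1)^i * a i) \<le> s (2*n+1)" for n
    using summable_Leibniz'(2,4)[OF assms] unfolding s_def by blast+
  have step: "s (Suc N) = s N + (-1)^N * a N" for N
    unfolding s_def by simp
  show ?thesis
  proof (cases "even L")
    case True
    then obtain n where "L = 2*n" by auto
    then show ?thesis using below[of n] above[of n] step[of L] unfolding s_def by simp
  next
    case False
    then obtain n where "L = 2*n+1" by (metis oddE)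
    then show ?thesis using below[of "Suc n"] above[of n] step[of L] unfolding s_def by simp
  qed
qed

lemma exp_minus_one_remainder:
  "\<bar>exp (-1) - (\<Sum>i<L. (-1)^i / fact i)\<bar> \<le> 1 / (fact L :: real)"
proof -
  have "(\<lambda>i. (-1::real)^i * (1 / fact i)) sums exp (-1)"
    using exp_converges[of "-1::real"] by (simp add: divide_inverse mult.commute)
  moreover have "(\<lambda>i. 1 / fact i :: real) \<longlonglongrightarrow> 0"
    using summable_LIMSEQ_zero[OF sums_summable[OF exp_converges[of "1::real"]]]
    by (simp add: divide_inverse)
  ultimately show ?thesis
    using alternating_series_remainder[of "\<lambda>i. 1 / fact i" L]
    by (simp add: sums_iff divide_simps fact_mono)
qed

lemma permutes_fixing_eq:
  assumes "S \<subseteq> A"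
  shows "{\<sigma>. \<sigma> permutes A \<and> (\<forall>i\<in>S. \<sigma> i = i)} = {\<sigma>. \<sigma> permutes (A - S)}"
proof (intro equalityI subsetI)
  fix \<sigma> assume "\<sigma> \<in> {\<sigma>. \<sigma> permutes A \<and> (\<forall>i\<in>S. \<sigma> i = i)}"
  then show "\<sigma> \<in> {\<sigma>. \<sigma> permutes (A - S)}"
    unfolding permutes_def by auto
next
  fix \<sigma> assume "\<sigma> \<in> {\<sigma>. \<sigma> permutes (A - S)}"
  then show "\<sigma> \<in> {\<sigma>. \<sigma> permutes A \<and> (\<forall>i\<in>S. \<sigma> i = i)}"
    using permutes_subset[of \<sigma> "A - S" A] permutes_not_in[of \<sigma> "A - S"] by auto
qed

lemma card_permutes_fixing:
  assumes "finite A" and "S \<subseteq> A"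
  shows "card {\<sigma>. \<sigma> permutes A \<and> (\<forall>i\<in>S. \<sigma> i = i)} = fact (card A - card S)"
proof -
  have "card (A - S) = card A - card S"
    using assms by (simp add: card_Diff_subset finite_subset)
  then show ?thesis
    unfolding permutes_fixing_eq[OF assms(2)] using assms(1) by (intro card_permutations) auto
qed

(* Factorial moments of the number of fixed points: count the pairs (sigma, S) with S a
   j-set of fixed points of sigma, once by sigma and once by S. *)
lemma sum_fixpoints_choose:
  assumes "finite A"
  shows "(\<Sum>\<sigma>\<in>{\<sigma>. \<sigma> permutes A}. card {i\<in>A. \<sigma> i = i} choose j) = (card A choose j) * fact (card A - j)"
proof -
  let ?P = "{\<sigma>. \<sigma> permutes A}" and ?Q = "{S. S \<subseteq> A \<and> card S = j}"
  have fin: "finite ?P" "finite ?Q"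
    using assms by (simp_all add: finite_permutations)
  have "card {i\<in>A. \<sigma> i = i} choose j = card {S\<in>?Q. \<forall>i\<in>S. \<sigma> i = i}" for \<sigma>
  proof -
    have "{S\<in>?Q. \<forall>i\<in>S. \<sigma> i = i} = {S. S \<subseteq> {i\<in>A. \<sigma> i = i} \<and> card S = j}" by auto
    then show ?thesis using assms by (simp add: n_subsets)
  qed
  then have "(\<Sum>\<sigma>\<in>?P. card {i\<in>A. \<sigma> i = i} choose j) = card (SIGMA \<sigma>:?P. {S\<in>?Q. \<forall>i\<in>S. \<sigma> i = i})"
    using fin by (subst card_SigmaI) (auto intro: finite_subset[OF _ fin(2)])
  also have "(SIGMA \<sigma>:?P. {S\<in>?Q. \<forall>i\<in>S. \<sigma> i = i}) = prod.swap ` (SIGMA S:?Q. {\<sigma>\<in>?P. \<forall>i\<in>S. \<sigma> i = i})"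
    by auto
  also have "card \<dots> = (\<Sum>S\<in>?Q. card {\<sigma>\<in>?P. \<forall>i\<in>S. \<sigma> i = i})"
    using fin by (subst card_image) (auto simp: card_SigmaI)
  also have "\<dots> = (\<Sum>S\<in>?Q. fact (card A - j))"
    using assms card_permutes_fixing[OF assms] by (intro sum.cong) auto
  also have "\<dots> = (card A choose j) * fact (card A - j)"
    using assms by (simp add: n_subsets)
  finally show ?thesis .
qed

(* Binomial inversion in the form needed to recover point counts from factorial moments:
   sum_i (-1)^i (m+i choose m) (w choose m+i) is the indicator of w = m. *)
lemma binomial_inversion_delta:
  fixes w m N :: nat
  assumes "w \<le> m + N"
  shows "(\<Sum>i\<le>N. (-1)^i * real (m+i choose m) * real (w choose (m+i))) = (if w = m then 1 else 0)"
proof (cases "w < m")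
  case True
  then show ?thesis by (simp add: binomial_eq_0)
next
  case False
  have "(-1)^i * real (m+i choose m) * real (w choose (m+i)) = real (w choose m) * ((-1)^i * real (w - m choose i))"
    for i
  proof (cases "m + i \<le> w")
    case True
    then have "(w choose (m+i)) * (m+i choose m) = (w choose m) * (w - m choose i)"
      using choose_mult[of m "m+i" w] by simp
    then show ?thesis by (simp add: algebra_simps flip: of_nat_mult)
  next
    case False
    then show ?thesis by (simp add: binomial_eq_0, arith)
  qed
  then have "(\<Sum>i\<le>N. (-1)^i * real (m+i choose m) * real (w choose (m+i)))
     = real (w choose m) * (\<Sum>i\<le>N. (-1)^i * real (w - m choose i))"
    by (simp only: sum_distrib_left)
  also have "(\<Sum>i\<le>N. (-1)^i * real (w - m choose i)) = (\<Sum>i\<le>w-m. (-1)^i * real (w - m choose i))"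
    by (rule sum.mono_neutral_right) (use assms in auto)
  finally show ?thesis
    using choose_alternating_sum[of "w-m", where 'a=real] False by (cases "w = m") auto
qed

lemma card_permutes_with_fixpoints:
  assumes A: "finite A" and m: "m \<le> card A"
  shows "real (card {\<sigma>. \<sigma> permutes A \<and> card {i\<in>A. \<sigma> i = i} = m})
       = fact (card A) / fact m * (\<Sum>i\<le>card A - m. (-1)^i / fact i)"
proof -
  let ?P = "{\<sigma>. \<sigma> permutes A}" and ?n = "card A"
  let ?W = "\<lambda>\<sigma>. card {i\<in>A. \<sigma> i = i}"
  have W_le: "?W \<sigma> \<le> m + (?n - m)" for \<sigma>
    using m A card_mono[of A "{i\<in>A. \<sigma> i = i}"] by auto
  have "real (card {\<sigma>. \<sigma> permutes A \<and> ?W \<sigma> = m}) = (\<Sum>\<sigma>\<in>?P. if ?W \<sigma> = m then 1 else 0)"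
    using A by (simp add: sum.If_cases Int_def finite_permutations)
  also have "\<dots> = (\<Sum>\<sigma>\<in>?P. \<Sum>i\<le>?n-m. (-1)^i * real (m+i choose m) * real (?W \<sigma> choose (m+i)))"
    using binomial_inversion_delta[OF W_le] by simp
  also have "\<dots> = (\<Sum>i\<le>?n-m. (-1)^i * real (m+i choose m) * real (\<Sum>\<sigma>\<in>?P. ?W \<sigma> choose (m+i)))"
    by (subst sum.swap) (simp add: sum_distrib_left)
  also have "\<dots> = (\<Sum>i\<le>?n-m. fact ?n / fact m * ((-1)^i / fact i))"
  proof (rule sum.cong[OF refl])
    fix i assume "i \<in> {..?n-m}"
    then have i: "m + i \<le> ?n" using m by auto
    have "real (m+i choose m) * real (?n choose (m+i)) * fact (?n - (m+i))
        = fact (m+i) / (fact m * fact i) * (fact ?n / (fact (m+i) * fact (?n - (m+i)))) * fact (?n - (m+i))"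
      using binomial_fact[of m "m+i", where 'a=real] binomial_fact[OF i, where 'a=real] by simp
    then show "(-1)^i * real (m+i choose m) * real (\<Sum>\<sigma>\<in>?P. ?W \<sigma> choose (m+i))
        = fact ?n / fact m * ((-1)^i / fact i)"
      by (simp add: sum_fixpoints_choose[OF A] field_simps)
  qed
  also have "\<dots> = fact ?n / fact m * (\<Sum>i\<le>?n-m. (-1)^i / fact i)"
    by (simp add: sum_distrib_left)
  finally show ?thesis .
qed

lemma prob_ge_eq_one_minus_sum:
  fixes p :: "'a pmf" and f :: "'a \<Rightarrow> nat"
  shows "measure_pmf.prob p {x. f x \<ge> k} = 1 - (\<Sum>m<k. measure_pmf.prob p {x. f x = m})"
proof -
  have "measure_pmf.prob p {x. f x < k} = measure_pmf.prob p (\<Union>m<k. {x. f x = m})"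
    by (intro arg_cong[where f="measure_pmf.prob p"]) auto
  also have "\<dots> = (\<Sum>m<k. measure_pmf.prob p {x. f x = m})"
    by (intro measure_pmf.finite_measure_finite_Union) (auto simp: disjoint_family_on_def)
  finally have "measure_pmf.prob p {x. f x < k} = (\<Sum>m<k. measure_pmf.prob p {x. f x = m})" .
  moreover have "{x. f x \<ge> k} = space (measure_pmf p) - {x. f x < k}"
    by auto
  ultimately show ?thesis
    by (metis measure_pmf.prob_compl sets_measure_pmf UNIV_I)
qed

lemma prob_num_fixed_eq:
  assumes "m \<le> n"
  shows "measure_pmf.prob (unif_perm n) {\<sigma>. num_fixed n \<sigma> = m}
       = (\<Sum>i\<le>n - m. (-1)^i / fact i) / fact m"
proof -
  let ?P = "{\<sigma>. \<sigma> permutes {1..n}}"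
  have "?P \<noteq> {}" "finite ?P"
    using permutes_id by (blast, simp add: finite_permutations)
  moreover have "card ?P = fact n"
    by (rule card_permutations) auto
  moreover have "?P \<inter> {\<sigma>. num_fixed n \<sigma> = m} = {\<sigma>. \<sigma> permutes {1..n} \<and> card {i\<in>{1..n}. \<sigma> i = i} = m}"
    unfolding num_fixed_def by auto
  ultimately show ?thesis
    using card_permutes_with_fixpoints[of "{1..n}" m] assms
    by (simp add: unif_perm_def measure_pmf_of_set)
qed

lemma prob_poisson_one_eq: "measure_pmf.prob (poisson_pmf 1) {j. j = m} = exp (-1) / fact m"
  by (simp add: measure_pmf_single)

(* P(W = m) and P(Y = m) share the factor 1/m!; the rest is the alternating series error. *)
lemma point_prob_error:
  assumes "m \<le> n"
  shows "\<bar>measure_pmf.prob (unif_perm n) {\<sigma>. num_fixed n \<sigma> = m}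
          - measure_pmf.prob (poisson_pmf 1) {j. j = m}\<bar> \<le> 1 / (fact m * fact (Suc (n - m)))"
proof -
  define F :: real where "F = fact (Suc (n - m))"
  have "\<bar>(\<Sum>i<Suc (n - m). (-1)^i / fact i) - exp (-1)\<bar> \<le> 1 / F"
    using exp_minus_one_remainder[of "Suc (n - m)"] unfolding F_def
    by (simp only: abs_minus_commute)
  then have "\<bar>(\<Sum>i<Suc (n - m). (-1)^i / fact i) - exp (-1)\<bar> / fact m \<le> 1 / F / fact m"
    by (rule divide_right_mono) simp
  then have "\<bar>(\<Sum>i<Suc (n - m). (-1)^i / fact i) - exp (-1)\<bar> / fact m \<le> 1 / (fact m * F)"
    by (simp only: divide_divide_eq_left mult.commute)
  then show ?thesis
    unfolding prob_num_fixed_eq[OF assms] prob_poisson_one_eq F_def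
    by (simp add: lessThan_Suc_atMost flip: diff_divide_distrib)
qed

lemma tail_prob_error:
  assumes "k \<le> n"
  shows "\<bar>measure_pmf.prob (unif_perm n) {\<sigma>. num_fixed n \<sigma> \<ge> k}
          - measure_pmf.prob (poisson_pmf 1) {j. j \<ge> k}\<bar> \<le> real k / fact (n - k + 2)"
proof -
  let ?pW = "\<lambda>m. measure_pmf.prob (unif_perm n) {\<sigma>. num_fixed n \<sigma> = m}"
  let ?pY = "\<lambda>m. measure_pmf.prob (poisson_pmf 1) {j. j = m}"
  have "measure_pmf.prob (unif_perm n) {\<sigma>. num_fixed n \<sigma> \<ge> k}
          - measure_pmf.prob (poisson_pmf 1) {j. j \<ge> k} = (\<Sum>m<k. ?pY m - ?pW m)"
    using prob_ge_eq_one_minus_sum[where p="unif_perm n" and f="num_fixed n" and k=k]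
      prob_ge_eq_one_minus_sum[where p="poisson_pmf 1" and f="\<lambda>j. j" and k=k]
    by (simp add: sum_subtractf)
  also have "\<bar>\<dots>\<bar> \<le> (\<Sum>m<k. \<bar>?pW m - ?pY m\<bar>)"
    by (subst abs_minus_commute) (rule sum_abs)
  also have "\<dots> \<le> (\<Sum>m<k. 1 / fact (n - k + 2))"
  proof (rule sum_mono)
    fix m assume "m \<in> {..<k}"
    then have m: "m < k" by simp
    have "fact (n - k + 2) \<le> (fact (Suc (n - m)) :: real)"
      using m assms by (intro fact_mono) auto
    also have "\<dots> \<le> fact m * fact (Suc (n - m))"
      by simp
    finally have "1 / (fact m * fact (Suc (n - m))) \<le> 1 / (fact (n - k + 2) :: real)"
      by (simp add: divide_simps)
    with point_prob_error[of m n] show "\<bar>?pW m - ?pY m\<bar> \<le> 1 / fact (n - k + 2)"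
      using m assms by simp
  qed
  also have "\<dots> = real k / fact (n - k + 2)"
    by simp
  finally show ?thesis .
qed

lemma poisson_tail_lower_bound:
  "measure_pmf.prob (poisson_pmf 1) {j. j \<ge> k} \<ge> exp (-1) / fact k"
proof -
  have "measure_pmf.prob (poisson_pmf 1) {k} \<le> measure_pmf.prob (poisson_pmf 1) {j. j \<ge> k}"
    by (rule measure_pmf.finite_measure_mono) auto
  then show ?thesis
    by (simp add: measure_pmf_single)
qed

lemma fact_mult_Suc_le:
  assumes "k \<le> j"
  shows "fact k * real (Suc j) \<le> fact (Suc j)"
proof -
  have "fact k * real (Suc j) \<le> fact j * real (Suc j)"
    using assms by (intro mult_right_mono fact_mono) auto
  then show ?thesis
    by (simp add: mult.commute)
qed

lemma ratio_error_bound: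
  assumes "0 < n" and "2 * k \<le> n"
  shows "\<bar>measure_pmf.prob (unif_perm n) {\<sigma>. num_fixed n \<sigma> \<ge> k}
           / measure_pmf.prob (poisson_pmf 1) {j. j \<ge> k} - 1\<bar> \<le> 6 * real k / real n"
proof -
  define PW where "PW = measure_pmf.prob (unif_perm n) {\<sigma>. num_fixed n \<sigma> \<ge> k}"
  define PY where "PY = measure_pmf.prob (poisson_pmf 1) {j. j \<ge> k}"
  define F :: real where "F = fact (n - k + 2)"
  have PY_lower: "exp (-1) / fact k \<le> PY"
    unfolding PY_def by (rule poisson_tail_lower_bound)
  moreover have "0 < exp (-1) / (fact k :: real)"
    by simp
  ultimately have PY_pos: "0 < PY"
    by linarith
  have F_pos: "0 < F"
    unfolding F_def by simp
  have F_lower: "fact k * real (n - k + 2) \<le> F"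
    using fact_mult_Suc_le[of k "n - k + 1"] assms(2) unfolding F_def by (simp add: Suc_diff_le)
  have "\<bar>PW / PY - 1\<bar> = \<bar>PW - PY\<bar> / PY"
    using PY_pos by (simp add: abs_div field_simps)
  also have "\<dots> \<le> (real k / F) / (exp (-1) / fact k)"
    using tail_prob_error[of k n] assms(2) PY_lower PY_pos unfolding PW_def PY_def F_def
    by (intro frac_le) auto
  also have "\<dots> = exp 1 * real k * fact k / F"
    by (simp add: exp_minus divide_inverse)
  also have "\<dots> \<le> exp 1 * real k * fact k / (fact k * real (n - k + 2))"
    using F_lower F_pos by (intro divide_left_mono) auto
  also have "\<dots> = exp 1 * real k / real (n - k + 2)"
    by simp
  also have "\<dots> \<le> 3 * real k / real (n - k + 2)"
    using exp_le by (intro divide_right_mono mult_right_mono) auto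
  also have "\<dots> = 6 * real k / (2 * real (n - k + 2))"
    by (simp add: field_simps)
  also have "\<dots> \<le> 6 * real k / real n"
    using assms by (intro divide_left_mono) (auto simp: of_nat_diff)
  finally show ?thesis
    unfolding PW_def PY_def .
qed

(* The bound in the shape of the theorem: k^2/n <= 1/2 forces 2k <= n, and k <= k^2. *)
lemma fixed_points_poisson_ratio:
  fixes n k :: nat
  assumes "n > 0" and "k > 0" and "real k ^ 2 / real n \<le> 1/2"
  shows "\<bar>measure_pmf.prob (unif_perm n) {\<sigma>. num_fixed n \<sigma> \<ge> k}
         / measure_pmf.prob (poisson_pmf 1) {j. j \<ge> k} - 1\<bar> \<le> 6 * real k ^ 2 / real n"
proof -
  have "k \<le> k ^ 2"
    using assms(2) by (simp add: power2_eq_square)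
  moreover have "2 * k ^ 2 \<le> n"
    using assms(1,3) by (simp add: field_simps flip: of_nat_power)
  ultimately have "2 * k \<le> n"
    by linarith
  then have "\<bar>measure_pmf.prob (unif_perm n) {\<sigma>. num_fixed n \<sigma> \<ge> k}
         / measure_pmf.prob (poisson_pmf 1) {j. j \<ge> k} - 1\<bar> \<le> 6 * real k / real n"
    using assms(1) by (intro ratio_error_bound)
  also have "\<dots> \<le> 6 * real k ^ 2 / real n"
    using \<open>k \<le> k ^ 2\<close> by (intro divide_right_mono) (simp_all flip: of_nat_power)
  finally show ?thesis .
qed

theorem mainTheorem7:
  shows "\<exists>c C :: real. c > 0 \<and> C > 0 \<and>
    (\<forall>n k :: nat. n > 0 \<longrightarrow> k > 0 \<longrightarrow> real k ^ 2 / real n \<le> c \<longrightarrow>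
      \<bar>measure_pmf.prob (unif_perm n) {\<sigma>. num_fixed n \<sigma> \<ge> k}
         / measure_pmf.prob (poisson_pmf 1) {j. j \<ge> k} - 1\<bar>
       \<le> C * real k ^ 2 / real n)"
  using fixed_points_poisson_ratio by (intro exI[of _ "1/2"] exI[of _ 6]) auto

end
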